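(* Let $K$ satisfy the standing kernel assumptions with $\varepsilon$ sufficiently small, let $f$ be a self-similar profile for $K$ normalized at $-1$, with desingularized Laplace transform $Q$, and let $U:=Q-\bar Q$ on $(-1,\infty)$, where $\bar Q(q)=q/(1+q)$. Suppose that $U$ satisfies $$-qU'(q)=(2\bar Q(q)-1)U(q)+U(q)^2+\mathcal{M}(f,f)(q)\quad (q>-1)$$ and $U(q)=o\big(\tfrac{1}{1+q}\big)$ as $q\downarrow-1$. Then for all $q>-1$ $$U(q)=-\frac{q}{(1+q)^2}\int_{-1}^q\frac{(1+s)^2}{s^2}\,\psi(s)\,ds,\qquad \psi=U^2+\mathcal{M}(f,f).$$ Furthermore, if $f_1,f_2$ are two such profiles with corresponding $U_1,U_2$, then for all $q>-1$ $$U_1(q)-U_2(q)=-\frac{q}{(1+q)^2}\int_{-1}^q\frac{(1+s)^2}{s^2}\big(U_1(s)^2-U_2(s)^2\big)ds-\frac{q}{(1+q)^2}\int_{-1}^q\frac{(1+s)^2}{s^2}\big(\mathcal{M}(f_1,f_1)(s)-\mathcal{M}(f_2,f_2)(s)\big)ds.$$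
   Context: Standing kernel assumptions: $\alpha\in[0,1)$, $\varepsilon>0$, $C_0>0$; $K:(0,\infty)^2\to[0,\infty)$ is symmetric, homogeneous of degree zero, differentiable, and with $W:=K-2$: $W\ge-\varepsilon$, $W(x,y)\le \varepsilon((x/y)^{\alpha}+(y/x)^{\alpha})$, $|\partial_x K(x,y)|\le \frac{C_0\varepsilon}{x}((x/y)^{\alpha}+(y/x)^{\alpha})$ for all $x,y>0$. A self-similar profile for $K$ is $f\in L^1_{loc}(0,\infty)$, $f\ge0$, $\int_0^\infty xf\,dx<\infty$, with $x^2 f(x)=\int_0^x dy\int_{x-y}^\infty dz\,K(y,z)\,y\,f(y)f(z)$ for a.e. $x>0$. $Q(q)=\int_0^\infty(1-e^{-qx})f(x)\,dx$ wherever $\int_0^\infty e^{-qx}f dx<\infty$; $f$ is normalized at $-1$ if $Q$ is finite on $(-1,\infty)$ and $|Q(q)|\to\infty$ as $q\downarrow-1$. $\mathcal{M}(f,f)(q)=\frac12\int_0^\infty\int_0^\infty W(x,y)f(x)f(y)(1-e^{-qx})(1-e^{-qy})\,dx\,dy$. *)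

theory Defs
  imports "HOL-Analysis.Analysis" "HOL-Library.Landau_Symbols"
begin

definition Wk :: "(real \<Rightarrow> real \<Rightarrow> real) \<Rightarrow> real \<Rightarrow> real \<Rightarrow> real" where
  "Wk K x y = K x y - 2"

definition kernel_assms ::
  "real \<Rightarrow> real \<Rightarrow> real \<Rightarrow> (real \<Rightarrow> real \<Rightarrow> real) \<Rightarrow> bool" where
  "kernel_assms \<alpha> \<epsilon> C0 K \<longleftrightarrow>
     0 \<le> \<alpha> \<and> \<alpha> < 1 \<and> 0 < \<epsilon> \<and> 0 < C0 \<and>
     (\<forall>x>0. \<forall>y>0. K x y \<ge> 0) \<and>
     (\<forall>x>0. \<forall>y>0. K x y = K y x) \<and>
     (\<forall>x>0. \<forall>y>0. \<forall>l>0. K (l * x) (l * y) = K x y) \<and>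
     (\<forall>x>0. \<forall>y>0. (\<lambda>p. K (fst p) (snd p)) differentiable (at (x, y))) \<and>
     (\<forall>x>0. \<forall>y>0. Wk K x y \<ge> - \<epsilon>) \<and>
     (\<forall>x>0. \<forall>y>0. Wk K x y \<le> \<epsilon> * ((x / y) powr \<alpha> + (y / x) powr \<alpha>)) \<and>
     (\<forall>x>0. \<forall>y>0. \<forall>D. ((\<lambda>t. K t y) has_real_derivative D) (at x) \<longrightarrow>
        \<bar>D\<bar> \<le> C0 * \<epsilon> / x * ((x / y) powr \<alpha> + (y / x) powr \<alpha>))"

text \<open>Self-similar profile for K (f is only relevant on (0,infinity)).\<close>
definition self_similar_profile :: "(real \<Rightarrow> real \<Rightarrow> real) \<Rightarrow> (real \<Rightarrow> real) \<Rightarrow> bool" where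
  "self_similar_profile K f \<longleftrightarrow>
     f \<in> borel_measurable lborel \<and>
     (\<forall>x>0. f x \<ge> 0) \<and>
     (\<forall>a b. 0 < a \<and> a \<le> b \<longrightarrow> set_integrable lborel {a..b} f) \<and>
     set_integrable lborel {0<..} (\<lambda>x. x * f x) \<and>
     (AE x in lborel. x > 0 \<longrightarrow>
        ennreal (x\<^sup>2 * f x) =
          (\<integral>\<^sup>+ y. indicator {0<..<x} y *
             (\<integral>\<^sup>+ z. indicator {x - y..} z * ennreal (K y z * y * f y * f z) \<partial>lborel) \<partial>lborel))"

definition Qlap :: "(real \<Rightarrow> real) \<Rightarrow> real \<Rightarrow> real" where
  "Qlap f q = (LINT x:{0<..}|lborel. (1 - exp (- q * x)) * f x)"

definition Qlap_defined :: "(real \<Rightarrow> real) \<Rightarrow> real \<Rightarrow> bool" where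
  "Qlap_defined f q \<longleftrightarrow> set_integrable lborel {0<..} (\<lambda>x. (1 - exp (- q * x)) * f x)"

definition normalized_at_m1 :: "(real \<Rightarrow> real) \<Rightarrow> bool" where
  "normalized_at_m1 f \<longleftrightarrow>
     (\<forall>q>-1. Qlap_defined f q) \<and>
     filterlim (\<lambda>q. \<bar>Qlap f q\<bar>) at_top (at_right (-1))"

definition Qbar :: "real \<Rightarrow> real" where
  "Qbar q = q / (1 + q)"

definition Mff :: "(real \<Rightarrow> real \<Rightarrow> real) \<Rightarrow> (real \<Rightarrow> real) \<Rightarrow> real \<Rightarrow> real" where
  "Mff K f q = 1/2 * (LINT p:({0<..} \<times> {0<..})|(lborel \<Otimes>\<^sub>M lborel).
      Wk K (fst p) (snd p) * f (fst p) * f (snd p) *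
      (1 - exp (- q * fst p)) * (1 - exp (- q * snd p)))"

definition U_hyps :: "(real \<Rightarrow> real \<Rightarrow> real) \<Rightarrow> (real \<Rightarrow> real) \<Rightarrow> bool" where
  "U_hyps K f \<longleftrightarrow>
     (let U = (\<lambda>q. Qlap f q - Qbar q) in
       (\<forall>q>-1. \<exists>D. (U has_real_derivative D) (at q) \<and>
          - q * D = (2 * Qbar q - 1) * U q + (U q)\<^sup>2 + Mff K f q) \<and>
       U \<in> smallo (at_right (- 1)) (\<lambda>q. 1 / (1 + q)))"

end

theory Submission
  imports Defs
begin

(*
  Since U(0) = 0, the equation for U is linear once U^2 + M is treated as a source, with
  integrating factor (1+s)^2/s^2:  d/ds [-(1+s)^2 U(s)/s] = (1+s)^2/s^2 (U(s)^2 + M(s)).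
  Integrating over [a, q] and letting a decrease to -1, the boundary term (1+a)^2 U(a)/a
  vanishes because U(a) = o(1/(1+a)).  The source is Lebesgue integrable on [a, q]: as a
  derivative it is Borel measurable and Henstock-Kurzweil integrable, and W >= -eps gives
  M >= -(eps/2) Q^2, a continuous lower bound.  The difference formula follows by subtracting
  the representations of U1 and U2, once the integrals of (1+s)^2 U^2/s^2 converge as a
  decreases to -1; their integrand is continuous and tends to 0 there.
*)

lemma set_integral_spike_point:
  fixes f g :: "real \<Rightarrow> real"
  assumes f: "set_integrable lborel A f" and eq: "\<And>s. s \<noteq> z \<Longrightarrow> f s = g s"
  shows "set_integrable lborel A g" and "(LINT s:A|lborel. g s) = (LINT s:A|lborel. f s)"
proof -
  have eq': "indicator A s *\<^sub>R f s = indicator A s *\<^sub>R g s" if "s \<notin> {z}" for s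
    using eq that by simp
  show "set_integrable lborel A g"
    using f integrable_discrete_difference[of "{z}" lborel, OF _ _ _ eq'] unfolding set_integrable_def by auto
  show "(LINT s:A|lborel. g s) = (LINT s:A|lborel. f s)"
    using integral_discrete_difference[of "{z}" lborel, OF _ _ _ eq'] unfolding set_lebesgue_integral_def by auto
qed

lemma tendsto_set_integral_at_right:
  fixes g :: "real \<Rightarrow> real"
  assumes ab: "a < b" and cont: "\<And>x. a < x \<Longrightarrow> x \<le> b \<Longrightarrow> isCont g x"
    and lim: "(g \<longlongrightarrow> L) (at_right a)"
  shows "((\<lambda>x. LINT s:{x..b}|lborel. g s) \<longlongrightarrow> (LINT s:{a..b}|lborel. (g(a := L)) s)) (at_right a)"
proof -
  define g' where "g' = g(a := L)"
  have "continuous_on {a..b} g'"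
  proof (rule continuous_on_IccI)
    have "eventually (\<lambda>x. g x = g' x) (at_right a)" by (auto simp: eventually_at_filter g'_def)
    from lim this have "(g' \<longlongrightarrow> L) (at_right a)" by (rule Lim_transform_eventually)
    then show "(g' \<longlongrightarrow> g' a) (at_right a)" by (simp add: g'_def)
    have "eventually (\<lambda>x. g x = g' x) (at_left b)"
      using eventually_at_left_real[OF ab] by eventually_elim (auto simp: g'_def)
    moreover have "(g \<longlongrightarrow> g b) (at_left b)"
      using cont[of b] ab by (simp add: isCont_def filterlim_at_split)
    ultimately show "(g' \<longlongrightarrow> g' b) (at_left b)" using ab by (auto simp: g'_def intro: Lim_transform_eventually)
    fix x assume x: "a < x" "x < b"
    have "eventually (\<lambda>y. y \<in> {a<..}) (nhds x)" using x by (intro eventually_nhds_in_open) auto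
    then have "eventually (\<lambda>y. g y = g' y) (nhds x)" by eventually_elim (auto simp: g'_def)
    then have "isCont g' x" using cont[of x] x isCont_cong by (metis less_imp_le)
    then show "g' \<midarrow>x\<rightarrow> g' x" by (simp add: isCont_def)
  qed fact
  then have "continuous_on {a..b} (\<lambda>x. integral {x..b} g')"
    by (intro indefinite_integral_continuous_1' integrable_continuous_interval)
  then have "((\<lambda>x. integral {x..b} g') \<longlongrightarrow> integral {a..b} g') (at_right a)"
    using ab by (rule continuous_on_Icc_at_rightD)
  moreover have "eventually (\<lambda>x. integral {x..b} g' = (LINT s:{x..b}|lborel. g s)) (at_right a)"
    using eventually_at_right_real[OF ab]
  proof eventually_elim
    case (elim x)
    have "continuous_on {x..b} g'"
      using \<open>continuous_on {a..b} g'\<close> by (rule continuous_on_subset) (use elim in auto)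
    then have "integral {x..b} g' = (LINT s:{x..b}|lborel. g' s)"
      by (simp add: set_borel_integral_eq_integral(2) borel_integrable_atLeastAtMost')
    also have "\<dots> = (LINT s:{x..b}|lborel. g s)"
      using elim by (intro set_lebesgue_integral_cong) (auto simp: g'_def)
    finally show ?case .
  qed
  moreover have "integral {a..b} g' = (LINT s:{a..b}|lborel. g' s)"
    using \<open>continuous_on {a..b} g'\<close>
    by (simp add: set_borel_integral_eq_integral(2) borel_integrable_atLeastAtMost')
  ultimately show ?thesis unfolding g'_def by (auto intro: Lim_transform_eventually)
qed

lemma borel_measurable_derivative_on_open:
  fixes G g :: "real \<Rightarrow> real"
  assumes S: "open S" and deriv: "\<And>s. s \<in> S \<Longrightarrow> (G has_real_derivative g s) (at s)"
  shows "(\<lambda>s. indicator S s * g s) \<in> borel_measurable borel"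
proof -
  define G0 where "G0 s = indicator S s *\<^sub>R G s" for s
  have "continuous_on S G"
    using deriv by (intro continuous_at_imp_continuous_on ballI DERIV_isCont) auto
  then have G0: "G0 \<in> borel_measurable borel"
    unfolding G0_def using S by (intro borel_measurable_continuous_on_indicator) auto
  define h :: "nat \<Rightarrow> real" where "h n = inverse (real (Suc n))" for n
  define u where "u n s = indicator S s * ((G0 (s + h n) - G0 s) / h n)" for n s
  have u: "u n \<in> borel_measurable borel" for n
  proof -
    have "(\<lambda>s. G0 (s + h n)) \<in> borel_measurable borel"
      by (intro measurable_compose[OF _ G0]) auto
    then show ?thesis unfolding u_def using G0 S
      by (intro borel_measurable_times borel_measurable_divide borel_measurable_diff) auto
  qed
  have h: "filterlim h (at 0) sequentially"
    unfolding filterlim_at h_def using LIMSEQ_inverse_real_of_nat by auto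
  have "(\<lambda>n. u n s) \<longlonglongrightarrow> indicator S s * g s" for s
  proof (cases "s \<in> S")
    case False then show ?thesis by (simp add: u_def)
  next
    case True
    have "((\<lambda>t. (G (s + t) - G s) / t) \<longlongrightarrow> g s) (at 0)"
      using deriv[OF True] unfolding DERIV_def .
    then have lim: "(\<lambda>n. (G (s + h n) - G s) / h n) \<longlonglongrightarrow> g s"
      by (rule filterlim_compose[OF _ h])
    have "((\<lambda>n. s + h n) \<longlongrightarrow> s + 0) sequentially"
      using h unfolding filterlim_at by (intro tendsto_add) auto
    then have "eventually (\<lambda>n. s + h n \<in> S) sequentially"
      using S True by (intro topological_tendstoD) auto
    then have "eventually (\<lambda>n. (G (s + h n) - G s) / h n = u n s) sequentially"
      by eventually_elim (use True in \<open>auto simp: u_def G0_def\<close>)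
    then show ?thesis using lim True by (auto intro: Lim_transform_eventually)
  qed
  then show ?thesis by (rule borel_measurable_LIMSEQ_real[OF _ u])
qed

lemma set_integrable_lborel_if_absolutely_integrable:
  fixes f :: "real \<Rightarrow> real"
  assumes "f absolutely_integrable_on S" "(\<lambda>x. indicator S x * f x) \<in> borel_measurable borel"
  shows "set_integrable lborel S f"
  using assms integrable_completion[of "\<lambda>x. indicator S x *\<^sub>R f x" lborel]
  unfolding set_integrable_def by auto

lemma set_integral_derivative_bounded_below:
  fixes F h b :: "real \<Rightarrow> real"
  assumes "a \<le> q" "finite S"
    and F: "continuous_on {a..q} F"
    and deriv: "\<And>s. s \<in> {a<..<q} - S \<Longrightarrow> (F has_real_derivative h s) (at s)"
    and b: "continuous_on {a..q} b" and hb: "\<And>s. s \<in> {a..q} \<Longrightarrow> b s \<le> h s"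
    and meas: "(\<lambda>s. indicator {a..q} s * h s) \<in> borel_measurable borel"
  shows "set_integrable lborel {a..q} h" and "(LINT s:{a..q}|lborel. h s) = F q - F a"
proof -
  have hF: "(h has_integral F q - F a) {a..q}"
    using assms
    by (intro fundamental_theorem_of_calculus_interior_strong[OF \<open>finite S\<close>])
       (auto simp: has_real_derivative_iff_has_vector_derivative)
  have "h absolutely_integrable_on {a..q}"
    using hF hb
    by (intro absolutely_integrable_absolutely_integrable_lbound[OF _ absolutely_integrable_continuous_real[OF b]])
       auto
  then show int: "set_integrable lborel {a..q} h"
    by (rule set_integrable_lborel_if_absolutely_integrable[OF _ meas])
  show "(LINT s:{a..q}|lborel. h s) = F q - F a"
    using set_borel_integral_eq_integral(2)[OF int] hF by (simp add: integral_unique)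
qed

lemma tendsto_set_integral_diff:
  fixes f g :: "'a \<Rightarrow> real"
  assumes "eventually (\<lambda>x. set_integrable M (A x) f \<and> set_integrable M (A x) g) F"
    and "((\<lambda>x. LINT s:A x|M. f s) \<longlongrightarrow> I) F" "((\<lambda>x. LINT s:A x|M. g s) \<longlongrightarrow> J) F"
  shows "((\<lambda>x. LINT s:A x|M. f s - g s) \<longlongrightarrow> I - J) F"
proof -
  have "eventually (\<lambda>x. (LINT s:A x|M. f s) - (LINT s:A x|M. g s) = (LINT s:A x|M. f s - g s)) F"
    using assms(1) by eventually_elim (simp add: set_integral_diff(2))
  with tendsto_diff[OF assms(2,3)] show ?thesis by (rule Lim_transform_eventually)
qed

lemma pair_product_set_integral:
  fixes \<phi> :: "real \<Rightarrow> real"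
  assumes int: "set_integrable lborel A \<phi>" and A: "A \<in> sets lborel"
  shows "set_integrable (lborel \<Otimes>\<^sub>M lborel) (A \<times> A) (\<lambda>p. \<phi> (fst p) * \<phi> (snd p))"
    and "(LINT p:A \<times> A|(lborel \<Otimes>\<^sub>M lborel). \<phi> (fst p) * \<phi> (snd p)) = (LINT x:A|lborel. \<phi> x)\<^sup>2"
proof -
  define \<psi> where "\<psi> x = indicator A x * \<phi> x" for x
  have \<psi>: "integrable lborel \<psi>" using int unfolding set_integrable_def \<psi>_def by simp
  then have [measurable]: "\<psi> \<in> borel_measurable lborel" by auto
  have eq: "(\<lambda>p. indicator (A \<times> A) p *\<^sub>R (\<phi> (fst p) * \<phi> (snd p))) = (\<lambda>(x, y). \<psi> x * \<psi> y)"
    by (auto simp: \<psi>_def indicator_def fun_eq_iff)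
  have prod: "integrable (lborel \<Otimes>\<^sub>M lborel) (\<lambda>(x, y). \<psi> x * \<psi> y)"
  proof (rule lborel_pair.Fubini_integrable)
    show "(\<lambda>(x, y). \<psi> x * \<psi> y) \<in> borel_measurable (lborel \<Otimes>\<^sub>M lborel)" by measurable
    show "integrable lborel (\<lambda>x. \<integral>y. norm ((\<lambda>(x, y). \<psi> x * \<psi> y) (x, y)) \<partial>lborel)"
      using \<psi> by (simp add: abs_mult)
    show "AE x in lborel. integrable lborel (\<lambda>y. (\<lambda>(x, y). \<psi> x * \<psi> y) (x, y))"
      using \<psi> by simp
  qed
  then show "set_integrable (lborel \<Otimes>\<^sub>M lborel) (A \<times> A) (\<lambda>p. \<phi> (fst p) * \<phi> (snd p))"
    unfolding set_integrable_def eq .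
  have "(LINT p:A \<times> A|(lborel \<Otimes>\<^sub>M lborel). \<phi> (fst p) * \<phi> (snd p))
        = (\<integral>p. (\<lambda>(x, y). \<psi> x * \<psi> y) p \<partial>(lborel \<Otimes>\<^sub>M lborel))"
    unfolding set_lebesgue_integral_def eq ..
  also have "\<dots> = (\<integral>x. (\<integral>y. \<psi> x * \<psi> y \<partial>lborel) \<partial>lborel)"
    using lborel_pair.integral_fst[of "\<lambda>x y. \<psi> x * \<psi> y"] prod by simp
  also have "\<dots> = (LINT x:A|lborel. \<phi> x)\<^sup>2"
    by (simp add: power2_eq_square set_lebesgue_integral_def \<psi>_def)
  finally show "(LINT p:A \<times> A|(lborel \<Otimes>\<^sub>M lborel). \<phi> (fst p) * \<phi> (snd p)) = (LINT x:A|lborel. \<phi> x)\<^sup>2" .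
qed

definition origin_slope :: "(real \<Rightarrow> real) \<Rightarrow> real \<Rightarrow> real" where
  "origin_slope U s = (if s = 0 then deriv U 0 else U s / s)"

lemma isCont_origin_slope:
  fixes U :: "real \<Rightarrow> real"
  assumes U0: "U 0 = 0" and D: "(U has_real_derivative D) (at 0)" and cont: "isCont U s"
  shows "isCont (origin_slope U) s"
proof (cases "s = 0")
  case True
  have "((\<lambda>t. (U t - U 0) / (t - 0)) \<longlongrightarrow> D) (at 0)"
    using D unfolding has_field_derivative_iff .
  moreover have "eventually (\<lambda>t. (U t - U 0) / (t - 0) = origin_slope U t) (at 0)"
    by (auto simp: eventually_at_filter origin_slope_def U0)
  ultimately have "(origin_slope U \<longlongrightarrow> D) (at 0)" by (rule Lim_transform_eventually)
  then show ?thesis using True DERIV_imp_deriv[OF D] by (simp add: continuous_at origin_slope_def)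
next
  case False
  have "isCont (\<lambda>t. U t / t) s" using cont False by (intro continuous_intros) auto
  moreover have "eventually (\<lambda>t. U t / t = origin_slope U t) (nhds s)"
    using t1_space_nhds[OF False] by eventually_elim (auto simp: origin_slope_def)
  ultimately show ?thesis by (metis isCont_cong)
qed

lemma tendsto_origin_slope_at_right_minus_one:
  fixes U :: "real \<Rightarrow> real"
  assumes "((\<lambda>s. (1 + s) * U s) \<longlongrightarrow> 0) (at_right (-1))"
  shows "((\<lambda>s. (1 + s) * origin_slope U s) \<longlongrightarrow> 0) (at_right (-1))"
proof -
  have "((\<lambda>s. (1 + s) * U s * (1 / s)) \<longlongrightarrow> 0 * (1 / -1)) (at_right (-1))"
    by (intro tendsto_mult assms tendsto_intros) auto
  moreover have "eventually (\<lambda>s. (1 + s) * U s * (1 / s) = (1 + s) * origin_slope U s) (at_right (-1))"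
  proof -
    have "eventually (\<lambda>s. s \<in> {-1<..<0}) (at_right (-1::real))"
      by (rule eventually_at_right_real) simp
    then show ?thesis by eventually_elim (auto simp: origin_slope_def)
  qed
  ultimately show ?thesis by (auto intro: Lim_transform_eventually)
qed

lemma tendsto_integrating_factor_at_right_minus_one:
  fixes U :: "real \<Rightarrow> real"
  assumes "((\<lambda>s. (1 + s) * U s) \<longlongrightarrow> 0) (at_right (-1))"
  shows "((\<lambda>s. - (1 + s)\<^sup>2 * origin_slope U s) \<longlongrightarrow> 0) (at_right (-1))"
proof -
  have "((\<lambda>s. - (1 + s) * ((1 + s) * origin_slope U s)) \<longlongrightarrow> - (1 + -1) * 0) (at_right (-1))"
    by (intro tendsto_intros tendsto_origin_slope_at_right_minus_one assms)
  then show ?thesis by (simp add: power2_eq_square algebra_simps)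
qed

lemma riccati_source_lower_bound:
  fixes U :: "real \<Rightarrow> real"
  assumes s: "s > -1" and e: "e \<ge> 0" and m: "m \<ge> - e * (U s + Qbar s)\<^sup>2"
  shows "- e * ((1 + s) * origin_slope U s + 1)\<^sup>2 \<le> (1 + s)\<^sup>2 / s\<^sup>2 * ((U s)\<^sup>2 + m)"
proof (cases "s = 0")
  case True then show ?thesis using e by simp
next
  case False
  have "1 + s \<noteq> 0" using s by simp
  then have "(1 + s) * origin_slope U s + 1 = (1 + s) / s * (U s + Qbar s)"
    using False by (simp add: origin_slope_def Qbar_def distrib_left)
  then have "- e * ((1 + s) * origin_slope U s + 1)\<^sup>2 = (1 + s)\<^sup>2 / s\<^sup>2 * (- e * (U s + Qbar s)\<^sup>2)"
    by (simp add: power_mult_distrib power_divide)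
  also have "\<dots> \<le> (1 + s)\<^sup>2 / s\<^sup>2 * ((U s)\<^sup>2 + m)"
    using m by (intro mult_left_mono) (auto intro: add_increasing)
  finally show ?thesis .
qed

lemma integrating_factor_has_derivative:
  fixes U :: "real \<Rightarrow> real"
  assumes s: "s > -1" "s \<noteq> 0" and dU: "(U has_real_derivative D) (at s)"
    and ode: "- s * D = (2 * Qbar s - 1) * U s + (U s)\<^sup>2 + m"
  shows "((\<lambda>t. - (1 + t)\<^sup>2 * origin_slope U t) has_real_derivative
           (1 + s)\<^sup>2 / s\<^sup>2 * ((U s)\<^sup>2 + m)) (at s)"
proof -
  have "((\<lambda>t. - (1 + t)\<^sup>2 * (U t / t)) has_real_derivative
          - (2 * (1 + s) * (U s / s) + (1 + s)\<^sup>2 * ((D * s - U s) / s\<^sup>2))) (at s)"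
    using s by (auto intro!: derivative_eq_intros dU simp: power2_eq_square field_simps)
  moreover have "- (2 * (1 + s) * (U s / s) + (1 + s)\<^sup>2 * ((D * s - U s) / s\<^sup>2))
                 = (1 + s)\<^sup>2 / s\<^sup>2 * ((U s)\<^sup>2 + m)"
  proof -
    have qbar: "(2 * Qbar s - 1) * (1 + s)\<^sup>2 = (s - 1) * (1 + s)"
      using s by (simp add: Qbar_def field_simps power2_eq_square)
    have "(1 + s)\<^sup>2 * - (D * s) = (1 + s)\<^sup>2 * ((2 * Qbar s - 1) * U s + (U s)\<^sup>2 + m)"
      using ode by (simp add: mult.commute)
    also have "\<dots> = ((2 * Qbar s - 1) * (1 + s)\<^sup>2) * U s + (1 + s)\<^sup>2 * ((U s)\<^sup>2 + m)"
      by (simp only: distrib_left mult_ac)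
    finally have ode': "(1 + s)\<^sup>2 * - (D * s) = (s - 1) * (1 + s) * U s + (1 + s)\<^sup>2 * ((U s)\<^sup>2 + m)"
      unfolding qbar .
    have "- (2 * (1 + s) * (U s / s) + (1 + s)\<^sup>2 * ((D * s - U s) / s\<^sup>2))
          = ((1 + s)\<^sup>2 * - (D * s) + (1 + s)\<^sup>2 * U s - 2 * (1 + s) * U s * s) / s\<^sup>2"
      using s by (simp add: field_simps power2_eq_square)
    also have "\<dots> = (1 + s)\<^sup>2 / s\<^sup>2 * ((U s)\<^sup>2 + m)"
      unfolding ode' by (simp add: field_simps power2_eq_square)
    finally show ?thesis .
  qed
  ultimately have "((\<lambda>t. - (1 + t)\<^sup>2 * (U t / t)) has_real_derivative
                     (1 + s)\<^sup>2 / s\<^sup>2 * ((U s)\<^sup>2 + m)) (at s)"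
    by simp
  then show ?thesis
    by (rule has_field_derivative_transform_within_open[where S = "- {0}"])
       (use s in \<open>auto simp: origin_slope_def\<close>)
qed

lemma riccati_square_term_improper_integral:
  fixes U :: "real \<Rightarrow> real"
  assumes U0: "U 0 = 0" and D: "(U has_real_derivative D) (at 0)"
    and cont: "\<And>s. s > -1 \<Longrightarrow> isCont U s"
    and small: "((\<lambda>s. (1 + s) * U s) \<longlongrightarrow> 0) (at_right (-1))" and q: "q > -1"
  shows "\<forall>a. -1 < a \<and> a \<le> q \<longrightarrow> set_integrable lborel {a..q} (\<lambda>s. (1 + s)\<^sup>2 / s\<^sup>2 * (U s)\<^sup>2)"
    and "\<exists>I. ((\<lambda>a. LINT s:{a..q}|lborel. (1 + s)\<^sup>2 / s\<^sup>2 * (U s)\<^sup>2) \<longlongrightarrow> I) (at_right (-1))"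
proof -
  define c where "c s = ((1 + s) * origin_slope U s)\<^sup>2" for s
  have c_cont: "isCont c s" if "s > -1" for s
    unfolding c_def using isCont_origin_slope[OF U0 D cont[OF that]] by (intro continuous_intros)
  have c_eq: "c s = (1 + s)\<^sup>2 / s\<^sup>2 * (U s)\<^sup>2" if "s \<noteq> 0" for s
    using that by (simp add: c_def origin_slope_def power_divide power_mult_distrib)
  have c_int: "set_integrable lborel {a..q} c" if "-1 < a" for a
    using c_cont that by (intro borel_integrable_atLeastAtMost' continuous_at_imp_continuous_on) auto
  show "\<forall>a. -1 < a \<and> a \<le> q \<longrightarrow> set_integrable lborel {a..q} (\<lambda>s. (1 + s)\<^sup>2 / s\<^sup>2 * (U s)\<^sup>2)"
    using set_integral_spike_point(1)[OF c_int c_eq] by blast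
  have "(c \<longlongrightarrow> 0\<^sup>2) (at_right (-1))"
    unfolding c_def by (intro tendsto_power tendsto_origin_slope_at_right_minus_one small)
  then have "((\<lambda>a. LINT s:{a..q}|lborel. c s) \<longlongrightarrow> (LINT s:{-1..q}|lborel. (c(-1 := 0)) s)) (at_right (-1))"
    using q c_cont by (intro tendsto_set_integral_at_right) auto
  moreover have "eventually (\<lambda>a. (LINT s:{a..q}|lborel. c s) =
                   (LINT s:{a..q}|lborel. (1 + s)\<^sup>2 / s\<^sup>2 * (U s)\<^sup>2)) (at_right (-1))"
    using eventually_at_right_real[OF q]
    by eventually_elim (use set_integral_spike_point(2)[OF c_int c_eq] in auto)
  ultimately show "\<exists>I. ((\<lambda>a. LINT s:{a..q}|lborel. (1 + s)\<^sup>2 / s\<^sup>2 * (U s)\<^sup>2) \<longlongrightarrow> I) (at_right (-1))"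
    by (auto intro: Lim_transform_eventually)
qed

text \<open>What the argument uses about U = Q - Qbar and M = M(f,f) for a profile f.\<close>

definition riccati_solution :: "(real \<Rightarrow> real) \<Rightarrow> (real \<Rightarrow> real) \<Rightarrow> real \<Rightarrow> bool" where
  "riccati_solution U M e \<longleftrightarrow>
     U 0 = 0 \<and> e \<ge> 0 \<and>
     (\<forall>s>-1. \<exists>D. (U has_real_derivative D) (at s) \<and>
        - s * D = (2 * Qbar s - 1) * U s + (U s)\<^sup>2 + M s) \<and>
     ((\<lambda>s. (1 + s) * U s) \<longlongrightarrow> 0) (at_right (-1)) \<and>
     (\<forall>s>-1. M s \<ge> - e * (U s + Qbar s)\<^sup>2)"

lemma riccati_integral_representation:
  fixes U M :: "real \<Rightarrow> real"
  assumes "riccati_solution U M e" and q: "q > -1"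
  shows "\<forall>a. -1 < a \<and> a \<le> q \<longrightarrow>
           set_integrable lborel {a..q} (\<lambda>s. (1 + s)\<^sup>2 / s\<^sup>2 * ((U s)\<^sup>2 + M s))"
    and "\<exists>I. ((\<lambda>a. LINT s:{a..q}|lborel. (1 + s)\<^sup>2 / s\<^sup>2 * ((U s)\<^sup>2 + M s)) \<longlongrightarrow> I) (at_right (-1))
            \<and> U q = - q / (1 + q)\<^sup>2 * I"
proof -
  from assms(1) have U0: "U 0 = 0" and e: "e \<ge> 0"
    and ode: "\<forall>s>-1. \<exists>D. (U has_real_derivative D) (at s) \<and>
                 - s * D = (2 * Qbar s - 1) * U s + (U s)\<^sup>2 + M s"
    and small: "((\<lambda>s. (1 + s) * U s) \<longlongrightarrow> 0) (at_right (-1))"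
    and M_ge: "\<And>s. s > -1 \<Longrightarrow> M s \<ge> - e * (U s + Qbar s)\<^sup>2"
    unfolding riccati_solution_def by auto
  define F where "F s = - (1 + s)\<^sup>2 * origin_slope U s" for s
  define h where "h s = (1 + s)\<^sup>2 / s\<^sup>2 * ((U s)\<^sup>2 + M s)" for s
  define b where "b s = - e * ((1 + s) * origin_slope U s + 1)\<^sup>2" for s
  obtain D0 where D0: "(U has_real_derivative D0) (at 0)" using ode by force
  have slope_cont: "isCont (origin_slope U) s" if "s > -1" for s
    using ode that by (intro isCont_origin_slope[OF U0 D0]) (auto intro: DERIV_isCont)
  have F_deriv: "(F has_real_derivative h s) (at s)" if s: "s \<in> {-1<..} - {0}" for s
  proof -
    obtain D where "(U has_real_derivative D) (at s)"
      and "- s * D = (2 * Qbar s - 1) * U s + (U s)\<^sup>2 + M s"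
      using ode s by force
    from integrating_factor_has_derivative[OF _ _ this] s show ?thesis
      unfolding F_def h_def by simp
  qed
  have b_le_h: "b s \<le> h s" if "s > -1" for s
    unfolding b_def h_def using that by (intro riccati_source_lower_bound e M_ge)
  have h_meas: "(\<lambda>s. indicator {a..q} s * h s) \<in> borel_measurable borel" if "-1 < a" for a
  proof -
    have "(\<lambda>s. indicator ({-1<..} - {0}) s * h s) \<in> borel_measurable borel"
      using F_deriv by (intro borel_measurable_derivative_on_open) auto
    then have "(\<lambda>s. indicator {a..q} s * (indicator ({-1<..} - {0}) s * h s)) \<in> borel_measurable borel"
      by measurable
    moreover have "indicator {a..q} s * (indicator ({-1<..} - {0}) s * h s) = indicator {a..q} s * h s" for s
      using that by (auto simp: h_def indicator_def)
    ultimately show ?thesis by simp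
  qed
  have h_int: "set_integrable lborel {a..q} h" and h_integral: "(LINT s:{a..q}|lborel. h s) = F q - F a"
    if a: "-1 < a" "a \<le> q" for a
  proof -
    have "continuous_on {a..q} F" "continuous_on {a..q} b"
      using slope_cont a unfolding F_def b_def
      by (auto intro!: continuous_at_imp_continuous_on continuous_intros)
    note * = set_integral_derivative_bounded_below[OF a(2) finite.insertI[OF finite.emptyI] this(1) _ this(2)]
    show "set_integrable lborel {a..q} h" "(LINT s:{a..q}|lborel. h s) = F q - F a"
      using a by (auto intro!: * F_deriv b_le_h h_meas)
  qed
  show "\<forall>a. -1 < a \<and> a \<le> q \<longrightarrow>
          set_integrable lborel {a..q} (\<lambda>s. (1 + s)\<^sup>2 / s\<^sup>2 * ((U s)\<^sup>2 + M s))"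
    using h_int unfolding h_def by blast
  have "(F \<longlongrightarrow> 0) (at_right (-1))"
    unfolding F_def by (rule tendsto_integrating_factor_at_right_minus_one[OF small])
  then have "((\<lambda>a. F q - F a) \<longlongrightarrow> F q) (at_right (-1))"
    by (auto intro: tendsto_eq_intros)
  moreover have "eventually (\<lambda>a. F q - F a = (LINT s:{a..q}|lborel. h s)) (at_right (-1))"
    using eventually_at_right_real[OF q] by eventually_elim (use h_integral in auto)
  ultimately have "((\<lambda>a. LINT s:{a..q}|lborel. h s) \<longlongrightarrow> F q) (at_right (-1))"
    by (rule Lim_transform_eventually)
  moreover have "U q = - q / (1 + q)\<^sup>2 * F q"
    using q U0 by (cases "q = 0") (auto simp: F_def origin_slope_def)
  ultimately show "\<exists>I. ((\<lambda>a. LINT s:{a..q}|lborel. (1 + s)\<^sup>2 / s\<^sup>2 * ((U s)\<^sup>2 + M s)) \<longlongrightarrow> I) (at_right (-1))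
            \<and> U q = - q / (1 + q)\<^sup>2 * I"
    unfolding h_def by blast
qed

lemma riccati_square_term:
  assumes "riccati_solution U M e" and q: "q > -1"
  shows "\<forall>a. -1 < a \<and> a \<le> q \<longrightarrow> set_integrable lborel {a..q} (\<lambda>s. (1 + s)\<^sup>2 / s\<^sup>2 * (U s)\<^sup>2)"
    and "\<exists>I. ((\<lambda>a. LINT s:{a..q}|lborel. (1 + s)\<^sup>2 / s\<^sup>2 * (U s)\<^sup>2) \<longlongrightarrow> I) (at_right (-1))"
proof -
  from assms(1) have U0: "U 0 = 0" and small: "((\<lambda>s. (1 + s) * U s) \<longlongrightarrow> 0) (at_right (-1))"
    and deriv: "\<forall>s>-1. \<exists>D. (U has_real_derivative D) (at s)"
    unfolding riccati_solution_def by blast+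
  then obtain D0 where D0: "(U has_real_derivative D0) (at 0)" by force
  have cont: "isCont U s" if "s > -1" for s
    using deriv that by (blast intro: DERIV_isCont)
  show "\<forall>a. -1 < a \<and> a \<le> q \<longrightarrow> set_integrable lborel {a..q} (\<lambda>s. (1 + s)\<^sup>2 / s\<^sup>2 * (U s)\<^sup>2)"
    "\<exists>I. ((\<lambda>a. LINT s:{a..q}|lborel. (1 + s)\<^sup>2 / s\<^sup>2 * (U s)\<^sup>2) \<longlongrightarrow> I) (at_right (-1))"
    using riccati_square_term_improper_integral[OF U0 D0 _ small q] cont by blast+
qed

lemma riccati_difference_representation:
  fixes U1 U2 M1 M2 :: "real \<Rightarrow> real"
  assumes sol1: "riccati_solution U1 M1 e1" and sol2: "riccati_solution U2 M2 e2" and q: "q > -1"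
  shows "\<exists>I1 I2.
           ((\<lambda>a. LINT s:{a..q}|lborel. (1 + s)\<^sup>2 / s\<^sup>2 * ((U1 s)\<^sup>2 - (U2 s)\<^sup>2)) \<longlongrightarrow> I1) (at_right (-1)) \<and>
           ((\<lambda>a. LINT s:{a..q}|lborel. (1 + s)\<^sup>2 / s\<^sup>2 * (M1 s - M2 s)) \<longlongrightarrow> I2) (at_right (-1)) \<and>
           U1 q - U2 q = - q / (1 + q)\<^sup>2 * I1 - q / (1 + q)\<^sup>2 * I2"
proof -
  define k :: "real \<Rightarrow> real" where "k s = (1 + s)\<^sup>2 / s\<^sup>2" for s
  note rep1 = riccati_integral_representation[OF sol1 q, folded k_def]
  note rep2 = riccati_integral_representation[OF sol2 q, folded k_def]
  obtain J1 J2 C1 C2 where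
    J1: "((\<lambda>a. LINT s:{a..q}|lborel. k s * ((U1 s)\<^sup>2 + M1 s)) \<longlongrightarrow> J1) (at_right (-1))"
      "U1 q = - q / (1 + q)\<^sup>2 * J1"
    and J2: "((\<lambda>a. LINT s:{a..q}|lborel. k s * ((U2 s)\<^sup>2 + M2 s)) \<longlongrightarrow> J2) (at_right (-1))"
      "U2 q = - q / (1 + q)\<^sup>2 * J2"
    and C1: "((\<lambda>a. LINT s:{a..q}|lborel. k s * (U1 s)\<^sup>2) \<longlongrightarrow> C1) (at_right (-1))"
    and C2: "((\<lambda>a. LINT s:{a..q}|lborel. k s * (U2 s)\<^sup>2) \<longlongrightarrow> C2) (at_right (-1))"
    using rep1(2) rep2(2) riccati_square_term[OF sol1 q, folded k_def] riccati_square_term[OF sol2 q, folded k_def] by blast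
  have "eventually (\<lambda>a. -1 < a \<and> a \<le> q) (at_right (-1))"
    using eventually_at_right_real[OF q] by eventually_elim auto
  then have ints: "eventually (\<lambda>a.
      set_integrable lborel {a..q} (\<lambda>s. k s * ((U1 s)\<^sup>2 + M1 s)) \<and>
      set_integrable lborel {a..q} (\<lambda>s. k s * ((U2 s)\<^sup>2 + M2 s)) \<and>
      set_integrable lborel {a..q} (\<lambda>s. k s * (U1 s)\<^sup>2) \<and>
      set_integrable lborel {a..q} (\<lambda>s. k s * (U2 s)\<^sup>2)) (at_right (-1))"
    by eventually_elim (use rep1(1) rep2(1) riccati_square_term[OF sol1 q, folded k_def] riccati_square_term[OF sol2 q, folded k_def] in blast)
  have "((\<lambda>a. LINT s:{a..q}|lborel. k s * (U1 s)\<^sup>2 - k s * (U2 s)\<^sup>2) \<longlongrightarrow> C1 - C2) (at_right (-1))"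
    using ints by (intro tendsto_set_integral_diff C1 C2) (auto elim: eventually_mono)
  then have I1: "((\<lambda>a. LINT s:{a..q}|lborel. k s * ((U1 s)\<^sup>2 - (U2 s)\<^sup>2)) \<longlongrightarrow> C1 - C2) (at_right (-1))"
    by (simp add: right_diff_distrib)
  have "((\<lambda>a. LINT s:{a..q}|lborel. (k s * ((U1 s)\<^sup>2 + M1 s) - k s * (U1 s)\<^sup>2)
          - (k s * ((U2 s)\<^sup>2 + M2 s) - k s * (U2 s)\<^sup>2)) \<longlongrightarrow> (J1 - C1) - (J2 - C2)) (at_right (-1))"
    using ints
    by (intro tendsto_set_integral_diff J1(1) J2(1) C1 C2) (auto elim!: eventually_mono)
  then have I2: "((\<lambda>a. LINT s:{a..q}|lborel. k s * (M1 s - M2 s)) \<longlongrightarrow> (J1 - C1) - (J2 - C2)) (at_right (-1))"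
    by (simp add: algebra_simps)
  have "U1 q - U2 q = - q / (1 + q)\<^sup>2 * (C1 - C2) - q / (1 + q)\<^sup>2 * ((J1 - C1) - (J2 - C2))"
    unfolding J1(2) J2(2) by (simp add: diff_divide_distrib add_divide_distrib algebra_simps)
  with I1 I2 show ?thesis unfolding k_def by blast
qed

lemma one_minus_exp_mult_nonneg:
  fixes s x y :: real
  assumes "x > 0" "y > 0"
  shows "0 \<le> (1 - exp (- s * x)) * (1 - exp (- s * y))"
proof (cases "s \<ge> 0")
  case True
  then have "exp (- s * x) \<le> 1" "exp (- s * y) \<le> 1" using assms by auto
  then show ?thesis by simp
next
  case False
  then have "s * x \<le> 0" "s * y \<le> 0" using assms by (auto intro: mult_nonpos_nonneg)
  then have "exp (- s * x) \<ge> 1" "exp (- s * y) \<ge> 1" by auto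
  then show ?thesis by (simp add: mult_nonpos_nonpos)
qed

lemma Mff_ge:
  assumes ka: "kernel_assms \<alpha> \<epsilon> C0 K" and Q: "Qlap_defined f s" and f_nonneg: "\<forall>x>0. f x \<ge> 0"
  shows "Mff K f s \<ge> - (\<epsilon> / 2) * (Qlap f s)\<^sup>2"
proof -
  define A :: "real set" where "A = {0<..}"
  define \<phi> where "\<phi> x = (1 - exp (- s * x)) * f x" for x
  define \<Phi> where "\<Phi> p = Wk K (fst p) (snd p) * f (fst p) * f (snd p) *
                        (1 - exp (- s * fst p)) * (1 - exp (- s * snd p))" for p
  have \<epsilon>: "\<epsilon> > 0" and W_ge: "\<forall>x>0. \<forall>y>0. Wk K x y \<ge> - \<epsilon>"
    using ka unfolding kernel_assms_def by auto
  have Q_eq: "Qlap f s = (LINT x:A|lborel. \<phi> x)" unfolding Qlap_def A_def \<phi>_def by simp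
  have M_eq: "Mff K f s = 1/2 * (LINT p:A \<times> A|(lborel \<Otimes>\<^sub>M lborel). \<Phi> p)"
    unfolding Mff_def A_def \<Phi>_def by simp
  have "set_integrable lborel A \<phi>" using Q unfolding Qlap_defined_def A_def \<phi>_def by simp
  note prod = pair_product_set_integral[OF this, unfolded A_def, simplified, folded A_def]
  show ?thesis
  proof (cases "set_integrable (lborel \<Otimes>\<^sub>M lborel) (A \<times> A) \<Phi>")
    case True
    have "(LINT p:A \<times> A|(lborel \<Otimes>\<^sub>M lborel). - \<epsilon> * (\<phi> (fst p) * \<phi> (snd p)))
          \<le> (LINT p:A \<times> A|(lborel \<Otimes>\<^sub>M lborel). \<Phi> p)"
    proof (rule set_integral_mono[OF set_integrable_mult_right[OF prod(1)] True])
      fix p assume "p \<in> A \<times> A"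
      then obtain x y where p: "p = (x, y)" "x > 0" "y > 0" by (auto simp: A_def)
      have "0 \<le> f x * f y * ((1 - exp (- s * x)) * (1 - exp (- s * y)))"
        using one_minus_exp_mult_nonneg[OF p(2,3)] f_nonneg p by simp
      then have "- \<epsilon> * (f x * f y * ((1 - exp (- s * x)) * (1 - exp (- s * y))))
                 \<le> Wk K x y * (f x * f y * ((1 - exp (- s * x)) * (1 - exp (- s * y))))"
        using W_ge p by (intro mult_right_mono) auto
      then show "- \<epsilon> * (\<phi> (fst p) * \<phi> (snd p)) \<le> \<Phi> p"
        unfolding \<phi>_def \<Phi>_def p by (simp add: algebra_simps)
    qed
    moreover have "(LINT p:A \<times> A|(lborel \<Otimes>\<^sub>M lborel). - \<epsilon> * (\<phi> (fst p) * \<phi> (snd p)))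
                   = - \<epsilon> * (Qlap f s)\<^sup>2"
      unfolding set_integral_mult_right prod(2) Q_eq ..
    ultimately show ?thesis using M_eq by simp
  next
    case False
    then have "(LINT p:A \<times> A|(lborel \<Otimes>\<^sub>M lborel). \<Phi> p) = 0"
      unfolding set_integrable_def set_lebesgue_integral_def by (rule not_integrable_integral_eq)
    then show ?thesis using M_eq \<epsilon> by simp
  qed
qed

lemma riccati_solution_of_profile:
  assumes ka: "kernel_assms \<alpha> \<epsilon> C0 K" and sp: "self_similar_profile K f"
    and nm: "normalized_at_m1 f" and uh: "U_hyps K f"
  shows "riccati_solution (\<lambda>s. Qlap f s - Qbar s) (Mff K f) (\<epsilon> / 2)"
proof -
  from uh have "(\<lambda>s. Qlap f s - Qbar s) \<in> o[at_right (-1)](\<lambda>s. 1 / (1 + s))"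
    unfolding U_hyps_def Let_def by blast
  from smalloD_tendsto[OF this] have "((\<lambda>s. (1 + s) * (Qlap f s - Qbar s)) \<longlongrightarrow> 0) (at_right (-1))"
    by (simp add: mult.commute)
  moreover have "Mff K f s \<ge> - (\<epsilon> / 2) * (Qlap f s - Qbar s + Qbar s)\<^sup>2" if "s > -1" for s
    using Mff_ge[OF ka] nm sp that
    unfolding normalized_at_m1_def self_similar_profile_def by simp
  ultimately show ?thesis
    using ka uh unfolding riccati_solution_def U_hyps_def kernel_assms_def Let_def
    by (simp add: Qlap_def Qbar_def)
qed

theorem lemma3p2:
  "\<forall>\<alpha> C0. 0 \<le> \<alpha> \<and> \<alpha> < 1 \<and> 0 < C0 \<longrightarrow>
   (\<exists>\<epsilon>0>0. \<forall>\<epsilon> K. 0 < \<epsilon> \<and> \<epsilon> < \<epsilon>0 \<and> kernel_assms \<alpha> \<epsilon> C0 K \<longrightarrow>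
     (\<forall>f. self_similar_profile K f \<and> normalized_at_m1 f \<and> U_hyps K f \<longrightarrow>
        (\<forall>q>-1.
           (\<forall>a. -1 < a \<and> a \<le> q \<longrightarrow>
              set_integrable lborel {a..q}
                (\<lambda>s. (1 + s)\<^sup>2 / s\<^sup>2 * ((Qlap f s - Qbar s)\<^sup>2 + Mff K f s))) \<and>
           (\<exists>I. ((\<lambda>a. LINT s:{a..q}|lborel. (1 + s)\<^sup>2 / s\<^sup>2 * ((Qlap f s - Qbar s)\<^sup>2 + Mff K f s))
                    \<longlongrightarrow> I) (at_right (-1)) \<and>
                Qlap f q - Qbar q = - q / (1 + q)\<^sup>2 * I))) \<and>
     (\<forall>f1 f2. self_similar_profile K f1 \<and> normalized_at_m1 f1 \<and> U_hyps K f1 \<and>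
              self_similar_profile K f2 \<and> normalized_at_m1 f2 \<and> U_hyps K f2 \<longrightarrow>
        (\<forall>q>-1.
           (\<exists>I1 I2.
              ((\<lambda>a. LINT s:{a..q}|lborel. (1 + s)\<^sup>2 / s\<^sup>2 *
                   ((Qlap f1 s - Qbar s)\<^sup>2 - (Qlap f2 s - Qbar s)\<^sup>2)) \<longlongrightarrow> I1) (at_right (-1)) \<and>
              ((\<lambda>a. LINT s:{a..q}|lborel. (1 + s)\<^sup>2 / s\<^sup>2 *
                   (Mff K f1 s - Mff K f2 s)) \<longlongrightarrow> I2) (at_right (-1)) \<and>
              (Qlap f1 q - Qbar q) - (Qlap f2 q - Qbar q) =
                 - q / (1 + q)\<^sup>2 * I1 - q / (1 + q)\<^sup>2 * I2))))"
proof -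
  \<comment> \<open>The threshold 1 is arbitrary: only W \<ge> -\<epsilon> is used, not the smallness of \<epsilon>.\<close>
  have sol: "riccati_solution (\<lambda>s. Qlap f s - Qbar s) (Mff K f) (\<epsilon> / 2)"
    if "0 < \<epsilon> \<and> \<epsilon> < 1 \<and> kernel_assms \<alpha> \<epsilon> C0 K"
      and "self_similar_profile K f \<and> normalized_at_m1 f \<and> U_hyps K f" for \<alpha> \<epsilon> C0 K f
    using that riccati_solution_of_profile by blast
  show ?thesis
    apply (intro allI impI, rule exI[of _ "1::real"], intro conjI allI impI zero_less_one)
    subgoal using riccati_integral_representation(1)[OF sol] by blast
    subgoal using riccati_integral_representation(2)[OF sol] by blast
    subgoal using riccati_difference_representation[OF sol sol] by blast
    done
qed

end
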